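(* Suppose $\mathcal Y$ is finite-dimensional and $c_{00}(\mathcal Z)\subseteq\underline{\mathcal Z}$. Let $H:\underline{\mathcal Z}\to\mathcal Y$ be a linear functional. (i) $H$ has the product FMP if and only if it has finite memory. (ii) If $\underline{\mathcal Z}=\mathcal Z^{\mathbb Z_-}$, then the following are equivalent: $H$ has the product FMP; $H$ has finite memory; $H$ has the minimal FMP and is minimally continuous.
   Context: Let $(\mathcal Z,\|\cdot\|)$ and $(\mathcal Y,\|\cdot\|_{\mathcal Y})$ be normed vector spaces over $\mathbb R$ and $\mathcal B=\{z\in\mathcal Z:\|z\|\le1\}$. Let $\mathbb Z_-=\{0,-1,-2,\dots\}$; elements of $\mathcal Z^{\mathbb Z_-}$ are sequences $\underline z=(z_t)_{t\le0}$. For $t\in\mathbb Z_-$, $\delta^t:\mathcal Z\to\mathcal Z^{\mathbb Z_-}$ maps $z$ to the sequence whose entry at time $t$ is $z$ and all other entries are $0$. Standing assumption: $\underline{\mathcal Z}\subseteq\mathcal Z^{\mathbb Z_-}$ is a set such that (a) $\underline{\mathcal Z}$ is convex and $\underline{\mathcal Z}=\{-\underline z:\underline z\in\underline{\mathcal Z}\}$; (b) $\delta^t(\mathcal B)\subseteq\underline{\mathcal Z}$ for all $t\in\mathbb Z_-$; (c) for every $\underline z\in\underline{\mathcal Z}$ and every $J\subseteq\mathbb Z_-$, the sequence $\sum_{t\in J}\delta^t(z_t)$ (equal to $z_t$ at times $t\in J$ and $0$ elsewhere) belongs to $\underline{\mathcal Z}$. A functional $H:\underline{\mathcal Z}\to\mathcal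 Y$ is linear if it is the restriction of a linear map defined on the linear span of $\underline{\mathcal Z}$. $c_{00}(\mathcal Z)$ is the set of sequences in $\mathcal Z^{\mathbb Z_-}$ with at most finitely many non-zero entries. $L(\mathcal Z,\mathcal Y)$ is the space of continuous linear maps $\mathcal Z\to\mathcal Y$. $H$ has a formal convolution representation if there is $\underline\kappa\in L(\mathcal Z,\mathcal Y)^{\mathbb Z_-}$ with $H(\underline z)=\lim_{T\to-\infty}\sum_{t=T}^0\kappa_t(z_t)$ for all $\underline z\in\underline{\mathcal Z}$ (such $\underline\kappa$ is unique). $H$ has finite memory if it has a formal convolution representation $\underline\kappa$ with $\kappa_t=0$ for all but at most finitely many $t\in\mathbb Z_-$. $H$ has the product fading memory property (product FMP) if it is continuous with respect to the subspace topology on $\underline{\mathcal Z}$ induced by the product topology on $\mathcal Z^{\mathbb Z_-}$ (each factor carrying the norm topology). $H$ is minimally continuous if $H\circ\delta^t:\mathcal B\to\mathcal Y$ is continuous for every $t\in\mathbb Z_-$. $H$ has the minimal fading memory property (minimal FMP) if $H(\sum_{t=T}^0\delta^t(z_t))\to H(\underline z)$ as $T\to-\infty$ for every $\underline z\in\underline{\mathcal Z}$. *)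

theory Defs
  imports "HOL-Analysis.Analysis"
begin

text \<open>Convention: a left-infinite sequence (z_t)_{t \<le> 0} is encoded as a function
  nat \<Rightarrow> 'z, where index n stands for time t = -n. Hence time -n corresponds to n,
  and the window {T,...,0} corresponds to {0..N} with N = -T.
  The function type carries the product topology (HOL-Analysis Function_Topology).\<close>

definition delta :: "nat \<Rightarrow> 'z::real_normed_vector \<Rightarrow> (nat \<Rightarrow> 'z)" where
  "delta t z = (\<lambda>s. if s = t then z else 0)"

definition admissible_inputs :: "(nat \<Rightarrow> 'z::real_normed_vector) set \<Rightarrow> bool" where
  "admissible_inputs Zs \<longleftrightarrow>
     (\<forall>x\<in>Zs. \<forall>y\<in>Zs. \<forall>u::real. 0 \<le> u \<and> u \<le> 1 \<longrightarrow> (\<lambda>n. u *\<^sub>R x n + (1 - u) *\<^sub>R y n) \<in> Zs)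
   \<and> (\<forall>x\<in>Zs. (\<lambda>n. - x n) \<in> Zs)
   \<and> (\<forall>t. \<forall>z. norm z \<le> 1 \<longrightarrow> delta t z \<in> Zs)
   \<and> (\<forall>x\<in>Zs. \<forall>J. (\<lambda>s. if s \<in> J then x s else 0) \<in> Zs)"

definition c00 :: "(nat \<Rightarrow> 'z::real_normed_vector) set" where
  "c00 = {x. finite {n. x n \<noteq> 0}}"

definition seq_span :: "(nat \<Rightarrow> 'z::real_normed_vector) set \<Rightarrow> (nat \<Rightarrow> 'z) set" where
  "seq_span S = {x. \<exists>F c. finite F \<and> F \<subseteq> S \<and> x = (\<lambda>n. \<Sum>u\<in>F. c u *\<^sub>R u n)}"

definition linear_functional ::
  "(nat \<Rightarrow> 'z::real_normed_vector) set \<Rightarrow> ((nat \<Rightarrow> 'z) \<Rightarrow> 'y::real_normed_vector) \<Rightarrow> bool" where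
  "linear_functional Zs H \<longleftrightarrow> (\<exists>L.
     (\<forall>x\<in>seq_span Zs. \<forall>y\<in>seq_span Zs. L (\<lambda>n. x n + y n) = L x + L y)
   \<and> (\<forall>x\<in>seq_span Zs. \<forall>c::real. L (\<lambda>n. c *\<^sub>R x n) = c *\<^sub>R L x)
   \<and> (\<forall>x\<in>Zs. H x = L x))"

definition is_convolution_rep ::
  "(nat \<Rightarrow> 'z::real_normed_vector) set \<Rightarrow> ((nat \<Rightarrow> 'z) \<Rightarrow> 'y::real_normed_vector)
     \<Rightarrow> (nat \<Rightarrow> 'z \<Rightarrow> 'y) \<Rightarrow> bool" where
  "is_convolution_rep Zs H \<kappa> \<longleftrightarrow>
     (\<forall>t. bounded_linear (\<kappa> t))
   \<and> (\<forall>x\<in>Zs. ((\<lambda>N. \<Sum>t\<le>N. \<kappa> t (x t)) \<longlongrightarrow> H x) sequentially)"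

definition has_finite_memory ::
  "(nat \<Rightarrow> 'z::real_normed_vector) set \<Rightarrow> ((nat \<Rightarrow> 'z) \<Rightarrow> 'y::real_normed_vector) \<Rightarrow> bool" where
  "has_finite_memory Zs H \<longleftrightarrow>
     (\<exists>\<kappa>. is_convolution_rep Zs H \<kappa> \<and> finite {t. \<kappa> t \<noteq> (\<lambda>_. 0)})"

definition product_FMP ::
  "(nat \<Rightarrow> 'z::real_normed_vector) set \<Rightarrow> ((nat \<Rightarrow> 'z) \<Rightarrow> 'y::real_normed_vector) \<Rightarrow> bool" where
  "product_FMP Zs H \<longleftrightarrow> continuous_on Zs H"

definition minimally_continuous ::
  "(nat \<Rightarrow> 'z::real_normed_vector) set \<Rightarrow> ((nat \<Rightarrow> 'z) \<Rightarrow> 'y::real_normed_vector) \<Rightarrow> bool" where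
  "minimally_continuous Zs H \<longleftrightarrow> (\<forall>t. continuous_on (cball 0 1) (\<lambda>z. H (delta t z)))"

definition minimal_FMP ::
  "(nat \<Rightarrow> 'z::real_normed_vector) set \<Rightarrow> ((nat \<Rightarrow> 'z) \<Rightarrow> 'y::real_normed_vector) \<Rightarrow> bool" where
  "minimal_FMP Zs H \<longleftrightarrow>
     (\<forall>x\<in>Zs. ((\<lambda>N. H (\<lambda>s. if s \<le> N then x s else 0)) \<longlongrightarrow> H x) sequentially)"

end

theory Submission
  imports Defs
begin

text \<open>The impulse responses \<open>\<kappa>\<^sub>t z = H (\<delta>\<^sup>t z)\<close> are linear, and on truncated inputs \<open>H\<close> is the
  finite convolution with them. Either continuity hypothesis makes every \<open>\<kappa>\<^sub>t\<close> bounded and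
  forces \<open>\<kappa>\<^sub>t (w\<^sub>t) \<rightarrow> 0\<close> for every sequence \<open>w\<close>: under the product FMP because
  \<open>\<delta>\<^sup>t (w\<^sub>t) \<rightarrow> 0\<close> coordinatewise however large the \<open>w\<^sub>t\<close> are, under the minimal FMP because
  the \<open>\<kappa>\<^sub>t (w\<^sub>t)\<close> are the terms of a convergent series. Choosing \<open>w\<^sub>t\<close> with \<open>\<parallel>\<kappa>\<^sub>t (w\<^sub>t)\<parallel> = 1\<close>
  whenever \<open>\<kappa>\<^sub>t \<noteq> 0\<close> then leaves only finitely many nonzero \<open>\<kappa>\<^sub>t\<close>.\<close>

lemma tendsto_fun_componentwise:
  fixes f :: "'a \<Rightarrow> 'i \<Rightarrow> 'b::topological_space"
  assumes "\<And>i. ((\<lambda>n. f n i) \<longlongrightarrow> l i) F"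
  shows "(f \<longlongrightarrow> l) F"
proof -
  have "limitin (product_topology (\<lambda>_. euclidean) UNIV) f l F"
    unfolding limitin_componentwise using assms by (simp add: limitin_canonical_iff)
  then show ?thesis by (simp add: euclidean_product_topology limitin_canonical_iff)
qed

lemma bounded_linear_if_continuous_on_cball:
  fixes f :: "'a::real_normed_vector \<Rightarrow> 'b::real_normed_vector"
  assumes "linear f" and "r > 0" and cont: "continuous_on (cball 0 r) f"
  shows "bounded_linear f"
proof -
  obtain d where "d > 0" and d: "\<And>z. z \<in> cball 0 r \<Longrightarrow> dist z 0 < d \<Longrightarrow> dist (f z) (f 0) < 1"
    using cont \<open>r > 0\<close> unfolding continuous_on_iff by (metis centre_in_cball less_imp_le zero_less_one)
  define e where "e = min d r / 2"
  have "e > 0" using \<open>d > 0\<close> \<open>r > 0\<close> by (simp add: e_def)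
  have small: "norm (f z) < 1" if "norm z \<le> e" for z
    using d[of z] that \<open>d > 0\<close> \<open>r > 0\<close> linear_0[OF \<open>linear f\<close>] by (simp add: e_def dist_norm)
  have "norm (f x) \<le> norm x * (1 / e)" for x
  proof (cases "x = 0")
    case True
    then show ?thesis using linear_0[OF \<open>linear f\<close>] by simp
  next
    case False
    define c where "c = e / norm x"
    have "c > 0" using False \<open>e > 0\<close> by (simp add: c_def)
    have "c * norm (f x) = norm (f (c *\<^sub>R x))"
      using \<open>c > 0\<close> linear_scale[OF \<open>linear f\<close>] by simp
    also have "\<dots> < 1" using False \<open>e > 0\<close> by (intro small) (simp add: c_def)
    finally show ?thesis using \<open>c > 0\<close> False by (simp add: c_def field_simps)
  qed
  then show ?thesis
    using \<open>linear f\<close> by (intro bounded_linear_intro[where K = "1 / e"]) (simp_all add: linear_add linear_scale)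
qed

lemma finite_nonzero_if_tendsto_zero:
  fixes \<kappa> :: "nat \<Rightarrow> 'a::real_vector \<Rightarrow> 'b::real_normed_vector"
  assumes lin: "\<And>t. linear (\<kappa> t)"
    and vanish: "\<And>w. ((\<lambda>t. \<kappa> t (w t)) \<longlongrightarrow> 0) sequentially"
  shows "finite {t. \<kappa> t \<noteq> (\<lambda>_. 0)}"
proof -
  have "\<exists>z. norm (\<kappa> t z) = 1" if nonzero: "\<kappa> t \<noteq> (\<lambda>_. 0)" for t
  proof -
    obtain z where "\<kappa> t z \<noteq> 0" using nonzero by (auto simp: fun_eq_iff)
    then have "norm (\<kappa> t ((1 / norm (\<kappa> t z)) *\<^sub>R z)) = 1"
      by (simp add: linear_scale[OF lin])
    then show ?thesis ..
  qed
  then obtain w where w: "\<And>t. \<kappa> t \<noteq> (\<lambda>_. 0) \<Longrightarrow> norm (\<kappa> t (w t)) = 1"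
    by metis
  have "eventually (\<lambda>t. norm (\<kappa> t (w t)) < 1) sequentially"
    using tendsto_norm_zero[OF vanish[of w]] by (rule order_tendstoD) simp
  then obtain M where "\<And>t. t \<ge> M \<Longrightarrow> norm (\<kappa> t (w t)) < 1"
    unfolding eventually_sequentially by blast
  then have "{t. \<kappa> t \<noteq> (\<lambda>_. 0)} \<subseteq> {..<M}"
    using w by (force simp: not_less[symmetric])
  then show ?thesis by (rule finite_subset) simp
qed

definition truncation :: "nat \<Rightarrow> (nat \<Rightarrow> 'z::zero) \<Rightarrow> nat \<Rightarrow> 'z" where
  "truncation N x = (\<lambda>s. if s \<le> N then x s else 0)"

lemma truncation_tendsto: "((\<lambda>N. truncation N x) \<longlongrightarrow> x) sequentially"
  unfolding truncation_def
  by (intro tendsto_fun_componentwise tendsto_eventually) (auto simp: eventually_sequentially)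

lemma delta_tendsto_zero: "((\<lambda>t. delta t (w t)) \<longlongrightarrow> (\<lambda>_. 0)) sequentially"
  unfolding delta_def
  by (intro tendsto_fun_componentwise tendsto_eventually eventually_mono[OF eventually_gt_at_top]) auto

lemma continuous_on_delta: "continuous_on UNIV (delta t)"
proof (rule continuous_on_coordinatewise_then_product)
  show "continuous_on UNIV (\<lambda>z. delta t z s)" for s
    by (cases "s = t") (simp_all add: delta_def)
qed

lemma delta_in_c00: "delta t z \<in> c00"
  unfolding c00_def delta_def by (rule CollectI, rule finite_subset[of _ "{t}"]) auto

lemma truncation_in_c00: "truncation N x \<in> c00"
  unfolding c00_def truncation_def by (rule CollectI, rule finite_subset[of _ "{..N}"]) auto

lemma seq_span_superset: "S \<subseteq> seq_span S"
proof
  show "x \<in> seq_span S" if "x \<in> S" for x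
    unfolding seq_span_def using that by (intro CollectI exI[of _ "{x}"] exI[of _ "\<lambda>_. 1"]) auto
qed

lemma linear_functional_add:
  assumes "linear_functional Zs H" and "x \<in> Zs" "y \<in> Zs" "(\<lambda>n. x n + y n) \<in> Zs"
  shows "H (\<lambda>n. x n + y n) = H x + H y"
proof -
  obtain L where L_add: "\<forall>x\<in>seq_span Zs. \<forall>y\<in>seq_span Zs. L (\<lambda>n. x n + y n) = L x + L y"
    and H_eq: "\<forall>x\<in>Zs. H x = L x"
    using assms(1) unfolding linear_functional_def by blast
  have "x \<in> seq_span Zs" "y \<in> seq_span Zs"
    using assms(2,3) seq_span_superset by blast+
  then show ?thesis using assms(2-4) L_add H_eq by simp
qed

lemma linear_functional_scaleR:
  assumes "linear_functional Zs H" and "x \<in> Zs" "(\<lambda>n. c *\<^sub>R x n) \<in> Zs"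
  shows "H (\<lambda>n. c *\<^sub>R x n) = c *\<^sub>R H x"
proof -
  obtain L where L_scaleR: "\<forall>x\<in>seq_span Zs. \<forall>c::real. L (\<lambda>n. c *\<^sub>R x n) = c *\<^sub>R L x"
    and H_eq: "\<forall>x\<in>Zs. H x = L x"
    using assms(1) unfolding linear_functional_def by blast
  have "x \<in> seq_span Zs"
    using assms(2) seq_span_superset by blast
  then show ?thesis using assms(2,3) L_scaleR H_eq by simp
qed

definition impulse_response :: "((nat \<Rightarrow> 'z::real_normed_vector) \<Rightarrow> 'y) \<Rightarrow> nat \<Rightarrow> 'z \<Rightarrow> 'y" where
  "impulse_response H t z = H (delta t z)"

lemma linear_impulse_response:
  assumes lin: "linear_functional Zs H" and c00_sub: "c00 \<subseteq> Zs"
  shows "linear (impulse_response H t)"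
proof (rule linearI)
  have in_Zs: "delta t z \<in> Zs" for z using delta_in_c00 c00_sub by blast
  show "impulse_response H t (a + b) = impulse_response H t a + impulse_response H t b" for a b
  proof -
    have "delta t (a + b) = (\<lambda>n. delta t a n + delta t b n)" by (auto simp: delta_def)
    then show ?thesis
      unfolding impulse_response_def using linear_functional_add[OF lin] in_Zs by metis
  qed
  show "impulse_response H t (c *\<^sub>R a) = c *\<^sub>R impulse_response H t a" for c a
  proof -
    have "delta t (c *\<^sub>R a) = (\<lambda>n. c *\<^sub>R delta t a n)" by (auto simp: delta_def)
    then show ?thesis
      unfolding impulse_response_def using linear_functional_scaleR[OF lin] in_Zs by metis
  qed
qed

lemma linear_functional_zero:
  assumes "linear_functional Zs H" and "c00 \<subseteq> Zs"
  shows "H (\<lambda>_. 0) = 0"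
proof -
  have "(\<lambda>_. 0) = delta 0 (0 :: 'a)" by (simp add: delta_def fun_eq_iff)
  then show ?thesis
    using linear_0[OF linear_impulse_response[OF assms, of 0]] by (simp add: impulse_response_def)
qed

lemma linear_functional_truncation:
  assumes lin: "linear_functional Zs H" and c00_sub: "c00 \<subseteq> Zs"
  shows "H (truncation N x) = (\<Sum>t\<le>N. impulse_response H t (x t))"
proof (induction N)
  case 0
  have "truncation 0 x = delta 0 (x 0)" by (auto simp: truncation_def delta_def)
  then show ?case by (simp add: impulse_response_def)
next
  case (Suc N)
  have in_Zs: "truncation M x \<in> Zs" "delta t z \<in> Zs" for M t z
    using c00_sub truncation_in_c00 delta_in_c00 by blast+
  have split: "truncation (Suc N) x = (\<lambda>n. truncation N x n + delta (Suc N) (x (Suc N)) n)"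
    by (auto simp: truncation_def delta_def)
  have "H (truncation (Suc N) x) = H (truncation N x) + impulse_response H (Suc N) (x (Suc N))"
    unfolding split impulse_response_def
    by (rule linear_functional_add[OF lin]) (simp_all add: in_Zs flip: split)
  then show ?case using Suc by simp
qed

lemma has_finite_memoryI:
  assumes lin: "linear_functional Zs H" and c00_sub: "c00 \<subseteq> Zs"
    and bounded: "\<And>t. bounded_linear (impulse_response H t)"
    and "minimal_FMP Zs H"
    and vanish: "\<And>w. ((\<lambda>t. impulse_response H t (w t)) \<longlongrightarrow> 0) sequentially"
  shows "has_finite_memory Zs H"
proof -
  have "((\<lambda>N. \<Sum>t\<le>N. impulse_response H t (x t)) \<longlongrightarrow> H x) sequentially" if "x \<in> Zs" for x
    using \<open>minimal_FMP Zs H\<close> that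
    by (simp add: minimal_FMP_def linear_functional_truncation[OF lin c00_sub, symmetric] truncation_def)
  then have "is_convolution_rep Zs H (impulse_response H)"
    unfolding is_convolution_rep_def using bounded by blast
  moreover have "finite {t. impulse_response H t \<noteq> (\<lambda>_. 0)}"
    using finite_nonzero_if_tendsto_zero bounded_linear.linear[OF bounded] vanish by blast
  ultimately show ?thesis unfolding has_finite_memory_def by blast
qed

lemma finite_support_convolution_rep_eq_sum:
  assumes rep: "is_convolution_rep Zs H \<kappa>" and "finite {t. \<kappa> t \<noteq> (\<lambda>_. 0)}"
  obtains M where "\<And>y. y \<in> Zs \<Longrightarrow> H y = (\<Sum>t\<le>M. \<kappa> t (y t))"
proof -
  obtain M where M: "\<And>t. \<kappa> t \<noteq> (\<lambda>_. 0) \<Longrightarrow> t \<le> M"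
    using \<open>finite _\<close> unfolding finite_nat_set_iff_bounded_le by auto
  have "H y = (\<Sum>t\<le>M. \<kappa> t (y t))" if "y \<in> Zs" for y
  proof -
    have "(\<Sum>t\<le>N. \<kappa> t (y t)) = (\<Sum>t\<le>M. \<kappa> t (y t))" if "N \<ge> M" for N
    proof (rule sum.mono_neutral_right)
      show "\<forall>t\<in>{..N} - {..M}. \<kappa> t (y t) = 0"
        using M by (metis DiffD2 atMost_iff)
    qed (use that in auto)
    then have "((\<lambda>N. \<Sum>t\<le>N. \<kappa> t (y t)) \<longlongrightarrow> (\<Sum>t\<le>M. \<kappa> t (y t))) sequentially"
      by (intro tendsto_eventually eventually_mono[OF eventually_ge_at_top[of M]])
    moreover have "((\<lambda>N. \<Sum>t\<le>N. \<kappa> t (y t)) \<longlongrightarrow> H y) sequentially"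
      using rep \<open>y \<in> Zs\<close> unfolding is_convolution_rep_def by blast
    ultimately show ?thesis by (rule LIMSEQ_unique[symmetric])
  qed
  then show ?thesis by (rule that)
qed

lemma finite_memory_imp_product_FMP:
  assumes "has_finite_memory Zs H"
  shows "product_FMP Zs H"
proof -
  obtain \<kappa> where rep: "is_convolution_rep Zs H \<kappa>" and fin: "finite {t. \<kappa> t \<noteq> (\<lambda>_. 0)}"
    using assms unfolding has_finite_memory_def by blast
  obtain M where H_eq: "\<And>y. y \<in> Zs \<Longrightarrow> H y = (\<Sum>t\<le>M. \<kappa> t (y t))"
    using finite_support_convolution_rep_eq_sum[OF rep fin] by blast
  have bounded: "\<And>t. bounded_linear (\<kappa> t)" using rep unfolding is_convolution_rep_def by blast
  have "continuous_on UNIV (\<lambda>y. \<Sum>t\<le>M. \<kappa> t (y t))"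
    by (intro continuous_on_sum bounded_linear.continuous_on[OF bounded] continuous_on_product_coordinates)
  then have "continuous_on Zs (\<lambda>y. \<Sum>t\<le>M. \<kappa> t (y t))"
    by (rule continuous_on_subset) simp
  then show ?thesis
    unfolding product_FMP_def by (rule continuous_on_cong[THEN iffD1, rotated 2]) (simp_all add: H_eq)
qed

lemma product_FMP_imp_minimal_FMP:
  assumes "c00 \<subseteq> Zs" and "product_FMP Zs H"
  shows "minimal_FMP Zs H"
proof -
  have "((\<lambda>N. H (truncation N x)) \<longlongrightarrow> H x) sequentially" if "x \<in> Zs" for x
    using assms truncation_in_c00 that unfolding product_FMP_def
    by (intro continuous_on_tendsto_compose[OF _ truncation_tendsto]) (auto intro!: always_eventually)
  then show ?thesis unfolding minimal_FMP_def truncation_def by blast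
qed

lemma product_FMP_imp_minimally_continuous:
  assumes "c00 \<subseteq> Zs" and "product_FMP Zs H"
  shows "minimally_continuous Zs H"
proof -
  have "continuous_on UNIV (\<lambda>z. H (delta t z))" for t
    using assms delta_in_c00 unfolding product_FMP_def
    by (intro continuous_on_compose2[OF _ continuous_on_delta]) auto
  then show ?thesis
    unfolding minimally_continuous_def by (blast intro: continuous_on_subset)
qed

lemma minimally_continuous_imp_bounded_linear:
  assumes "linear_functional Zs H" and "c00 \<subseteq> Zs" and "minimally_continuous Zs H"
  shows "bounded_linear (impulse_response H t)"
  using assms linear_impulse_response unfolding minimally_continuous_def impulse_response_def
  by (intro bounded_linear_if_continuous_on_cball[where r = 1]) auto

lemma product_FMP_imp_impulse_response_tendsto_zero:
  assumes lin: "linear_functional Zs H" and c00_sub: "c00 \<subseteq> Zs" and "product_FMP Zs H"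
  shows "((\<lambda>t. impulse_response H t (w t)) \<longlongrightarrow> 0) sequentially"
proof -
  have "(\<lambda>_. 0) \<in> c00" by (simp add: c00_def)
  then have zero_in_Zs: "(\<lambda>_. 0) \<in> Zs" using c00_sub by blast
  have "((\<lambda>t. H (delta t (w t))) \<longlongrightarrow> H (\<lambda>_. 0)) sequentially"
    using assms(3) c00_sub delta_in_c00 zero_in_Zs unfolding product_FMP_def
    by (intro continuous_on_tendsto_compose[OF _ delta_tendsto_zero]) (auto intro!: always_eventually)
  then show ?thesis
    by (simp add: impulse_response_def linear_functional_zero[OF lin c00_sub])
qed

lemma minimal_FMP_imp_impulse_response_tendsto_zero:
  assumes lin: "linear_functional UNIV H" and "minimal_FMP UNIV H"
  shows "((\<lambda>t. impulse_response H t (w t)) \<longlongrightarrow> 0) sequentially"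
proof -
  have "((\<lambda>N. H (truncation N w)) \<longlongrightarrow> H w) sequentially"
    using \<open>minimal_FMP UNIV H\<close> unfolding minimal_FMP_def truncation_def by blast
  then have "(\<lambda>t. impulse_response H t (w t)) sums H w"
    unfolding sums_def_le by (simp add: linear_functional_truncation[OF lin])
  then show ?thesis by (intro summable_LIMSEQ_zero sums_summable)
qed

lemma product_FMP_iff_finite_memory:
  assumes lin: "linear_functional Zs H" and c00_sub: "c00 \<subseteq> Zs"
  shows "product_FMP Zs H \<longleftrightarrow> has_finite_memory Zs H"
proof
  assume PF: "product_FMP Zs H"
  show "has_finite_memory Zs H"
  proof (rule has_finite_memoryI[OF lin c00_sub])
    show "bounded_linear (impulse_response H t)" for t
      using minimally_continuous_imp_bounded_linear[OF lin c00_sub]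
        product_FMP_imp_minimally_continuous[OF c00_sub PF] by blast
    show "minimal_FMP Zs H" using product_FMP_imp_minimal_FMP[OF c00_sub PF] .
    show "((\<lambda>t. impulse_response H t (w t)) \<longlongrightarrow> 0) sequentially" for w
      using product_FMP_imp_impulse_response_tendsto_zero[OF lin c00_sub PF] .
  qed
qed (rule finite_memory_imp_product_FMP)

lemma finite_memory_iff_minimal_FMP_minimally_continuous:
  assumes lin: "linear_functional UNIV H"
  shows "has_finite_memory UNIV H \<longleftrightarrow> minimal_FMP UNIV H \<and> minimally_continuous UNIV H"
proof
  assume "has_finite_memory UNIV H"
  then have "product_FMP UNIV H" by (rule finite_memory_imp_product_FMP)
  then show "minimal_FMP UNIV H \<and> minimally_continuous UNIV H"
    using product_FMP_imp_minimal_FMP product_FMP_imp_minimally_continuous by blast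
next
  assume "minimal_FMP UNIV H \<and> minimally_continuous UNIV H"
  then show "has_finite_memory UNIV H"
    using has_finite_memoryI[OF lin] minimally_continuous_imp_bounded_linear[OF lin]
      minimal_FMP_imp_impulse_response_tendsto_zero[OF lin] by blast
qed

theorem proposition3p13:
  fixes Zs :: "(nat \<Rightarrow> 'z::real_normed_vector) set"
    and H :: "(nat \<Rightarrow> 'z) \<Rightarrow> 'y::real_normed_vector"
  assumes adm: "admissible_inputs Zs"
    and findim: "\<exists>B::'y set. finite B \<and> span B = UNIV"
    and c00_sub: "c00 \<subseteq> Zs"
    and lin: "linear_functional Zs H"
  shows "(product_FMP Zs H \<longleftrightarrow> has_finite_memory Zs H)
       \<and> (Zs = UNIV \<longrightarrow>
            (product_FMP Zs H \<longleftrightarrow> has_finite_memory Zs H)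
          \<and> (has_finite_memory Zs H \<longleftrightarrow> minimal_FMP Zs H \<and> minimally_continuous Zs H))"
  using product_FMP_iff_finite_memory[OF lin c00_sub]
    finite_memory_iff_minimal_FMP_minimally_continuous lin by blast

end
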